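(* Let $L$ be a distributive lattice and $\mathbf x,\mathbf y\in L^n$. The following are equivalent: (i) $\mathbf x$ and $\mathbf y$ are g-comonotone; (ii) $\mathbf x$ and $\mathbf y$ are dually g-comonotone; (iii) $\bigwedge_{i\in I}(x_i\vee y_i)=\bigwedge_{i\in I}x_i\vee\bigwedge_{i\in I}y_i$ for each non-empty subset $I\subseteq\{1,\dots,n\}$; (iv) $\bigvee_{i\in I}(x_i\wedge y_i)=\bigvee_{i\in I}x_i\wedge\bigvee_{i\in I}y_i$ for each non-empty subset $I\subseteq\{1,\dots,n\}$.
   Context: $\mathbf x,\mathbf y\in L^n$ are g-comonotone if for every pair $i,j\in\{1,\dots,n\}$: $(x_i\vee y_i)\wedge(x_j\vee y_j)=(x_i\wedge x_j)\vee(y_i\wedge y_j)$. They are dually g-comonotone if for every pair $i,j$: $(x_i\wedge y_i)\vee(x_j\wedge y_j)=(x_i\vee x_j)\wedge(y_i\vee y_j)$. *)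

theory Defs
  imports Main
begin

text \<open>Vectors in L^n are modelled as functions nat => L, only the entries at
indices 1..n being relevant.\<close>

definition g_comonotone :: "nat \<Rightarrow> (nat \<Rightarrow> 'a::distrib_lattice) \<Rightarrow> (nat \<Rightarrow> 'a) \<Rightarrow> bool" where
  "g_comonotone n x y \<longleftrightarrow>
     (\<forall>i\<in>{1..n}. \<forall>j\<in>{1..n}.
        inf (sup (x i) (y i)) (sup (x j) (y j)) = sup (inf (x i) (x j)) (inf (y i) (y j)))"

definition dually_g_comonotone :: "nat \<Rightarrow> (nat \<Rightarrow> 'a::distrib_lattice) \<Rightarrow> (nat \<Rightarrow> 'a) \<Rightarrow> bool" where
  "dually_g_comonotone n x y \<longleftrightarrow>
     (\<forall>i\<in>{1..n}. \<forall>j\<in>{1..n}.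
        sup (inf (x i) (y i)) (inf (x j) (y j)) = inf (sup (x i) (x j)) (sup (y i) (y j)))"

end

theory Submission
  imports Defs
begin

text \<open>
  For four elements of a distributive lattice, \<open>(a \<squnion> b) \<sqinter> (c \<squnion> d) = (a \<sqinter> c) \<squnion> (b \<sqinter> d)\<close>
  holds iff \<open>a \<sqinter> d \<le> b \<squnion> c\<close> and \<open>b \<sqinter> c \<le> a \<squnion> d\<close>. This condition is symmetric in \<open>b\<close>
  and \<open>c\<close>, and swapping them turns the g-comonotonicity identity for \<open>i, j\<close> into the dual one,
  which gives (i) \<open>\<Longleftrightarrow>\<close> (ii).
  For (i) \<open>\<Longrightarrow>\<close> (iii), distributivity writes \<open>\<Sqinter>x\<^sub>I \<squnion> \<Sqinter>y\<^sub>I\<close> as the meet of all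
  \<open>x\<^sub>i \<squnion> y\<^sub>j\<close> with \<open>i, j \<in> I\<close>, and each of them lies above
  \<open>(x\<^sub>i \<squnion> y\<^sub>i) \<sqinter> (x\<^sub>j \<squnion> y\<^sub>j) = (x\<^sub>i \<sqinter> x\<^sub>j) \<squnion> (y\<^sub>i \<sqinter> y\<^sub>j)\<close>; conversely (i) is (iii) for
  \<open>I = {i, j}\<close>.
\<close>

unbundle lattice_syntax

lemma inf_le_sup_inf_if_le_sup:
  fixes a b c d :: "'a::distrib_lattice"
  assumes "a \<sqinter> d \<le> b \<squnion> c"
  shows "a \<sqinter> d \<le> (a \<sqinter> c) \<squnion> (b \<sqinter> d)"
proof -
  have "a \<sqinter> d = a \<sqinter> d \<sqinter> (b \<squnion> c)"
    using assms by (simp add: inf.absorb1)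
  also have "\<dots> = (a \<sqinter> d \<sqinter> b) \<squnion> (a \<sqinter> d \<sqinter> c)"
    by (rule inf_sup_distrib1)
  also have "\<dots> \<le> (b \<sqinter> d) \<squnion> (a \<sqinter> c)"
    by (intro sup_mono le_infI) (simp_all add: le_infI1 le_infI2)
  finally show ?thesis
    by (simp add: sup_commute)
qed

lemma inf_sup_eq_sup_inf_iff:
  fixes a b c d :: "'a::distrib_lattice"
  shows "(a \<squnion> b) \<sqinter> (c \<squnion> d) = (a \<sqinter> c) \<squnion> (b \<sqinter> d) \<longleftrightarrow> a \<sqinter> d \<le> b \<squnion> c \<and> b \<sqinter> c \<le> a \<squnion> d"
proof
  assume eq: "(a \<squnion> b) \<sqinter> (c \<squnion> d) = (a \<sqinter> c) \<squnion> (b \<sqinter> d)"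
  have "a \<sqinter> d \<le> (a \<squnion> b) \<sqinter> (c \<squnion> d)" "b \<sqinter> c \<le> (a \<squnion> b) \<sqinter> (c \<squnion> d)"
    by (simp_all add: le_infI1 le_infI2)
  moreover have "(a \<sqinter> c) \<squnion> (b \<sqinter> d) \<le> b \<squnion> c" "(a \<sqinter> c) \<squnion> (b \<sqinter> d) \<le> a \<squnion> d"
    by (simp_all add: le_infI1 le_infI2 le_supI1 le_supI2)
  ultimately show "a \<sqinter> d \<le> b \<squnion> c \<and> b \<sqinter> c \<le> a \<squnion> d"
    unfolding eq by (blast intro: order_trans)
next
  assume "a \<sqinter> d \<le> b \<squnion> c \<and> b \<sqinter> c \<le> a \<squnion> d"
  then have "a \<sqinter> d \<le> (a \<sqinter> c) \<squnion> (b \<sqinter> d)" "b \<sqinter> c \<le> (a \<sqinter> c) \<squnion> (b \<sqinter> d)"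
    using inf_le_sup_inf_if_le_sup[of a d b c] inf_le_sup_inf_if_le_sup[of b c a d]
    by (simp_all add: sup_commute)
  moreover have "(a \<squnion> b) \<sqinter> (c \<squnion> d) = (a \<sqinter> c) \<squnion> (b \<sqinter> d) \<squnion> (a \<sqinter> d) \<squnion> (b \<sqinter> c)"
    by (simp add: inf_sup_distrib1 inf_sup_distrib2 ac_simps)
  ultimately show "(a \<squnion> b) \<sqinter> (c \<squnion> d) = (a \<sqinter> c) \<squnion> (b \<sqinter> d)"
    by (simp add: sup_absorb1)
qed

lemma inf_sup_eq_sup_inf_iff_sup_inf_eq_inf_sup:
  fixes a b c d :: "'a::distrib_lattice"
  shows "(a \<squnion> b) \<sqinter> (c \<squnion> d) = (a \<sqinter> c) \<squnion> (b \<sqinter> d) \<longleftrightarrow> (a \<sqinter> b) \<squnion> (c \<sqinter> d) = (a \<squnion> c) \<sqinter> (b \<squnion> d)"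
  using inf_sup_eq_sup_inf_iff[of a b c d] inf_sup_eq_sup_inf_iff[of a c b d]
  by (auto simp: ac_simps)

lemma g_comonotone_iff_dually_g_comonotone:
  "g_comonotone n x y \<longleftrightarrow> dually_g_comonotone n x y"
  unfolding g_comonotone_def dually_g_comonotone_def
  by (simp add: inf_sup_eq_sup_inf_iff_sup_inf_eq_inf_sup)

lemma Inf_fin_sup_image_eq:
  fixes x y :: "'b \<Rightarrow> 'a::distrib_lattice"
  assumes I: "finite I" "I \<noteq> {}"
    and pairwise: "\<And>i j. i \<in> I \<Longrightarrow> j \<in> I \<Longrightarrow> (x i \<squnion> y i) \<sqinter> (x j \<squnion> y j) = (x i \<sqinter> x j) \<squnion> (y i \<sqinter> y j)"
  shows "Inf_fin ((\<lambda>i. x i \<squnion> y i) ` I) = Inf_fin (x ` I) \<squnion> Inf_fin (y ` I)"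
proof (rule antisym)
  have "Inf_fin ((\<lambda>i. x i \<squnion> y i) ` I) \<le> Inf_fin {a \<squnion> b |a b. a \<in> x ` I \<and> b \<in> y ` I}"
  proof (rule Inf_fin.boundedI)
    show "finite {a \<squnion> b |a b. a \<in> x ` I \<and> b \<in> y ` I}" "{a \<squnion> b |a b. a \<in> x ` I \<and> b \<in> y ` I} \<noteq> {}"
      using I by (auto intro: finite_image_set2)
  next
    fix u
    assume "u \<in> {a \<squnion> b |a b. a \<in> x ` I \<and> b \<in> y ` I}"
    then obtain i j where ij: "i \<in> I" "j \<in> I" and u: "u = x i \<squnion> y j"
      by blast
    have "Inf_fin ((\<lambda>i. x i \<squnion> y i) ` I) \<le> (x i \<squnion> y i) \<sqinter> (x j \<squnion> y j)"
      using I ij by (simp add: Inf_fin.coboundedI)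
    also have "\<dots> = (x i \<sqinter> x j) \<squnion> (y i \<sqinter> y j)"
      using pairwise ij .
    also have "\<dots> \<le> u"
      unfolding u by (simp add: le_infI1 le_infI2 le_supI1 le_supI2)
    finally show "Inf_fin ((\<lambda>i. x i \<squnion> y i) ` I) \<le> u" .
  qed
  then show "Inf_fin ((\<lambda>i. x i \<squnion> y i) ` I) \<le> Inf_fin (x ` I) \<squnion> Inf_fin (y ` I)"
    using I by (simp add: sup_Inf2_distrib)
next
  show "Inf_fin (x ` I) \<squnion> Inf_fin (y ` I) \<le> Inf_fin ((\<lambda>i. x i \<squnion> y i) ` I)"
    using I by (auto intro!: Inf_fin.boundedI intro: le_supI1 le_supI2 Inf_fin.coboundedI)
qed

lemma Sup_fin_inf_image_eq:
  fixes x y :: "'b \<Rightarrow> 'a::distrib_lattice"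
  assumes I: "finite I" "I \<noteq> {}"
    and pairwise: "\<And>i j. i \<in> I \<Longrightarrow> j \<in> I \<Longrightarrow> (x i \<sqinter> y i) \<squnion> (x j \<sqinter> y j) = (x i \<squnion> x j) \<sqinter> (y i \<squnion> y j)"
  shows "Sup_fin ((\<lambda>i. x i \<sqinter> y i) ` I) = Sup_fin (x ` I) \<sqinter> Sup_fin (y ` I)"
proof (rule antisym)
  show "Sup_fin ((\<lambda>i. x i \<sqinter> y i) ` I) \<le> Sup_fin (x ` I) \<sqinter> Sup_fin (y ` I)"
    using I by (auto intro!: Sup_fin.boundedI intro: le_infI1 le_infI2 Sup_fin.coboundedI)
next
  have "Sup_fin {a \<sqinter> b |a b. a \<in> x ` I \<and> b \<in> y ` I} \<le> Sup_fin ((\<lambda>i. x i \<sqinter> y i) ` I)"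
  proof (rule Sup_fin.boundedI)
    show "finite {a \<sqinter> b |a b. a \<in> x ` I \<and> b \<in> y ` I}" "{a \<sqinter> b |a b. a \<in> x ` I \<and> b \<in> y ` I} \<noteq> {}"
      using I by (auto intro: finite_image_set2)
  next
    fix u
    assume "u \<in> {a \<sqinter> b |a b. a \<in> x ` I \<and> b \<in> y ` I}"
    then obtain i j where ij: "i \<in> I" "j \<in> I" and u: "u = x i \<sqinter> y j"
      by blast
    have "u \<le> (x i \<squnion> x j) \<sqinter> (y i \<squnion> y j)"
      unfolding u by (simp add: le_infI1 le_infI2 le_supI1 le_supI2)
    also have "\<dots> = (x i \<sqinter> y i) \<squnion> (x j \<sqinter> y j)"
      using pairwise[OF ij] by simp
    also have "\<dots> \<le> Sup_fin ((\<lambda>i. x i \<sqinter> y i) ` I)"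
      using I ij by (simp add: Sup_fin.coboundedI)
    finally show "u \<le> Sup_fin ((\<lambda>i. x i \<sqinter> y i) ` I)" .
  qed
  then show "Sup_fin (x ` I) \<sqinter> Sup_fin (y ` I) \<le> Sup_fin ((\<lambda>i. x i \<sqinter> y i) ` I)"
    using I by (simp add: inf_Sup2_distrib)
qed

lemma g_comonotone_iff_Inf_fin_sup_image_eq:
  "g_comonotone n x y \<longleftrightarrow> (\<forall>I. I \<subseteq> {1..n} \<and> I \<noteq> {} \<longrightarrow>
     Inf_fin ((\<lambda>i. x i \<squnion> y i) ` I) = Inf_fin (x ` I) \<squnion> Inf_fin (y ` I))"
  (is "_ \<longleftrightarrow> (\<forall>I. ?nonempty I \<longrightarrow> ?distrib I)")
proof
  assume "g_comonotone n x y"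
  then show "\<forall>I. ?nonempty I \<longrightarrow> ?distrib I"
    by (auto simp: g_comonotone_def intro!: Inf_fin_sup_image_eq
             intro: finite_subset[OF _ finite_atLeastAtMost])
next
  assume distrib: "\<forall>I. ?nonempty I \<longrightarrow> ?distrib I"
  show "g_comonotone n x y"
    unfolding g_comonotone_def
  proof (intro ballI)
    fix i j
    assume "i \<in> {1..n}" "j \<in> {1..n}"
    then have "?distrib {i, j}"
      using distrib by (intro distrib[rule_format]) simp
    then show "(x i \<squnion> y i) \<sqinter> (x j \<squnion> y j) = (x i \<sqinter> x j) \<squnion> (y i \<sqinter> y j)"
      by (cases "i = j") auto
  qed
qed

lemma dually_g_comonotone_iff_Sup_fin_inf_image_eq:
  "dually_g_comonotone n x y \<longleftrightarrow> (\<forall>I. I \<subseteq> {1..n} \<and> I \<noteq> {} \<longrightarrow>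
     Sup_fin ((\<lambda>i. x i \<sqinter> y i) ` I) = Sup_fin (x ` I) \<sqinter> Sup_fin (y ` I))"
  (is "_ \<longleftrightarrow> (\<forall>I. ?nonempty I \<longrightarrow> ?distrib I)")
proof
  assume "dually_g_comonotone n x y"
  then show "\<forall>I. ?nonempty I \<longrightarrow> ?distrib I"
    by (auto simp: dually_g_comonotone_def intro!: Sup_fin_inf_image_eq
             intro: finite_subset[OF _ finite_atLeastAtMost])
next
  assume distrib: "\<forall>I. ?nonempty I \<longrightarrow> ?distrib I"
  show "dually_g_comonotone n x y"
    unfolding dually_g_comonotone_def
  proof (intro ballI)
    fix i j
    assume "i \<in> {1..n}" "j \<in> {1..n}"
    then have "?distrib {i, j}"
      by (intro distrib[rule_format]) simp
    then show "(x i \<sqinter> y i) \<squnion> (x j \<sqinter> y j) = (x i \<squnion> x j) \<sqinter> (y i \<squnion> y j)"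
      by (cases "i = j") auto
  qed
qed

theorem theorem2:
  fixes n :: nat and x y :: "nat \<Rightarrow> 'a::distrib_lattice"
  shows "(g_comonotone n x y \<longleftrightarrow> dually_g_comonotone n x y)
    \<and> (dually_g_comonotone n x y \<longleftrightarrow>
         (\<forall>I. I \<subseteq> {1..n} \<and> I \<noteq> {} \<longrightarrow>
            Inf_fin ((\<lambda>i. sup (x i) (y i)) ` I) = sup (Inf_fin (x ` I)) (Inf_fin (y ` I))))
    \<and> ((\<forall>I. I \<subseteq> {1..n} \<and> I \<noteq> {} \<longrightarrow>
            Inf_fin ((\<lambda>i. sup (x i) (y i)) ` I) = sup (Inf_fin (x ` I)) (Inf_fin (y ` I)))
       \<longleftrightarrow>
       (\<forall>I. I \<subseteq> {1..n} \<and> I \<noteq> {} \<longrightarrow>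
            Sup_fin ((\<lambda>i. inf (x i) (y i)) ` I) = inf (Sup_fin (x ` I)) (Sup_fin (y ` I))))"
  unfolding g_comonotone_iff_Inf_fin_sup_image_eq[symmetric]
    dually_g_comonotone_iff_Sup_fin_inf_image_eq[symmetric]
    g_comonotone_iff_dually_g_comonotone
  by simp

end
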